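(* Let $c>0$, $F>1$, $s>0$ be constants. There exist constants $\varepsilon,\alpha_2>0$ depending only on $c,F$ such that for all sufficiently large $n$: if $Z^t\le\varepsilon n$ and $\lambda^t\le F$, then $$\mathbb E[Z^{t+1}-Z^t\mid x^t,\lambda^t]\ge\alpha_2.$$
   Context: Consider the SA-$(1,\lambda)$-EA on a dynamic monotone function: a function $f:\{0,1\}^n\to\mathbb R$ is monotone if $f(x)>f(y)$ whenever $x\ne y$ and $x_i\ge y_i$ for all $i$; $(f^t)_{t\ge0}$ is a sequence of monotone functions, $f^t$ possibly chosen adversarially depending on $x^t$. The algorithm (with constants $c>0$, $s>0$, $F>1$) maintains $x^t\in\{0,1\}^n$, real $\lambda^t\ge1$; in generation $t$ it creates $\lfloor\lambda^t\rceil$ (nearest integer) offspring, each independently by flipping every bit of $x^t$ independently with probability $c/n$; $x^{t+1}$ is an offspring maximizing $f^t$ (ties uniformly at random); $\lambda^{t+1}=\max\{1,\lambda^t/F\}$ if $f^t(x^{t+1})>f^t(x^t)$, else $\lambda^{t+1}=F^{1/s}\lambda^t$. $Z^t$ is the number of zero-bits of $x^t$. *)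

theory Defs
  imports "HOL-Probability.Probability"
begin

text \<open>Bit strings of length n are bool lists (True = one-bit, False = zero-bit).\<close>

definition zeros :: "bool list \<Rightarrow> nat" where
  "zeros x = length (filter Not x)"

definition monotone_bits :: "nat \<Rightarrow> (bool list \<Rightarrow> real) \<Rightarrow> bool" where
  "monotone_bits n f \<longleftrightarrow>
     (\<forall>x y. length x = n \<and> length y = n \<and> x \<noteq> y \<and> (\<forall>i<n. y ! i \<longrightarrow> x ! i) \<longrightarrow> f x > f y)"

fun mutate :: "real \<Rightarrow> bool list \<Rightarrow> bool list pmf" where
  "mutate p [] = return_pmf []"
| "mutate p (b # bs) =
     bind_pmf (bernoulli_pmf p) (\<lambda>fl. bind_pmf (mutate p bs) (\<lambda>r. return_pmf ((b \<noteq> fl) # r)))"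

fun iid_list :: "nat \<Rightarrow> 'a pmf \<Rightarrow> 'a list pmf" where
  "iid_list 0 M = return_pmf []"
| "iid_list (Suc k) M = bind_pmf M (\<lambda>y. bind_pmf (iid_list k M) (\<lambda>ys. return_pmf (y # ys)))"

definition select_best :: "(bool list \<Rightarrow> real) \<Rightarrow> bool list list \<Rightarrow> bool list pmf" where
  "select_best f ys =
     map_pmf (\<lambda>i. ys ! i)
       (pmf_of_set {i. i < length ys \<and> (\<forall>j<length ys. f (ys ! j) \<le> f (ys ! i))})"

text \<open>Distribution of x^{t+1} in one generation of the SA-(1,lambda)-EA with mutation
  rate c/n, given x^t = x, lambda^t = lam, and fitness f^t = f.
  The number of offspring is the nearest integer to lam (round, halves rounded up).\<close>
definition ea_next :: "real \<Rightarrow> nat \<Rightarrow> real \<Rightarrow> (bool list \<Rightarrow> real) \<Rightarrow> bool list \<Rightarrow> bool list pmf" where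
  "ea_next c n lam f x =
     bind_pmf (iid_list (nat (round lam)) (mutate (c / real n) x)) (select_best f)"

end

theory Submission
  imports Defs
begin

text \<open>Because the offspring population size is bounded by a constant, the drift can be bounded
  without looking at the fitness function at all. With probability at least
  \<open>((1 - c/n)^Z - (1 - c/n)^n)^\<lambda>\<close>, which is bounded below by a constant when \<open>Z \<le> \<epsilon>n\<close>,
  every offspring flips at least one bit but no zero-bit, so whichever offspring is selected
  has strictly more zero-bits. In every case the selected offspring loses at most the total
  number of zero-bits flipped among all offspring, whose expectation \<open>\<lambda> c Z / n \<le> F c \<epsilon>\<close>
  is small.\<close>

lemma expectation_bind_pmf_finite:
  fixes g :: "_ \<Rightarrow> real"
  assumes fin: "finite (set_pmf (bind_pmf M N))"
  shows "measure_pmf.expectation (bind_pmf M N) g =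
         measure_pmf.expectation M (\<lambda>x. measure_pmf.expectation (N x) g)"
proof -
  define S where "S = set_pmf (bind_pmf M N)"
  define g' where "g' y = (if y \<in> S then g y else 0)" for y
  have bounded: "\<bar>g' y\<bar> \<le> (\<Sum>y\<in>S. \<bar>g y\<bar>)" for y
    unfolding g'_def using fin S_def
    by (auto intro: member_le_sum[where f="\<lambda>y. \<bar>g y\<bar>", simplified])
  have "measure_pmf.expectation (bind_pmf M N) g = measure_pmf.expectation (bind_pmf M N) g'"
    by (intro integral_cong_AE) (auto simp: AE_measure_pmf_iff g'_def S_def)
  also have "\<dots> = integral\<^sup>L (measure_pmf M \<bind> (\<lambda>x. measure_pmf (N x))) g'"
    by (simp add: measure_pmf_bind)
  also have "\<dots> = \<integral>x. integral\<^sup>L (measure_pmf (N x)) g' \<partial>measure_pmf M"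
    by (rule integral_bind[where K="count_space UNIV" and B="\<Sum>y\<in>S. \<bar>g y\<bar>" and B'=1])
       (auto simp: bounded measure_pmf.finite_measure measure_pmf.emeasure_space_1
             space_subprob_algebra
             intro!: prob_space_imp_subprob_space measure_pmf.prob_space_axioms
             intro: measurable_compose[OF _ measurable_measure_pmf])
  also have "\<dots> = measure_pmf.expectation M (\<lambda>x. measure_pmf.expectation (N x) g)"
    by (intro integral_cong_AE)
       (auto simp: AE_measure_pmf_iff g'_def S_def intro!: integral_cong_AE)
  finally show ?thesis .
qed

lemma zeros_Nil [simp]: "zeros [] = 0"
  by (simp add: zeros_def)

lemma zeros_Cons [simp]: "zeros (b # bs) = (if b then zeros bs else Suc (zeros bs))"
  by (simp add: zeros_def)

lemma mutate_Cons_map_pmf: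
  "mutate p (b # bs) = bind_pmf (bernoulli_pmf p) (\<lambda>fl. map_pmf ((#) (b \<noteq> fl)) (mutate p bs))"
  by (simp add: map_pmf_def)

lemma length_mutate: "y \<in> set_pmf (mutate p x) \<Longrightarrow> length y = length x"
  by (induction x arbitrary: y) auto

lemma finite_set_pmf_mutate: "finite (set_pmf (mutate p x))"
proof (rule finite_subset)
  show "set_pmf (mutate p x) \<subseteq> {y. set y \<subseteq> UNIV \<and> length y = length x}"
    using length_mutate by auto
  show "finite {y :: bool list. set y \<subseteq> UNIV \<and> length y = length x}"
    by (rule finite_lists_length_eq) simp
qed

lemma expectation_mutate_Cons:
  fixes g :: "bool list \<Rightarrow> real"
  assumes "0 \<le> p" "p \<le> 1"
  shows "measure_pmf.expectation (mutate p (b # bs)) g =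
           p * measure_pmf.expectation (mutate p bs) (\<lambda>y. g ((\<not> b) # y))
         + (1 - p) * measure_pmf.expectation (mutate p bs) (\<lambda>y. g (b # y))"
proof -
  have "measure_pmf.expectation (mutate p (b # bs)) g =
          measure_pmf.expectation (bernoulli_pmf p)
            (\<lambda>fl. measure_pmf.expectation (map_pmf ((#) (b \<noteq> fl)) (mutate p bs)) g)"
    unfolding mutate_Cons_map_pmf
    by (rule expectation_bind_pmf_finite) (metis finite_set_pmf_mutate mutate_Cons_map_pmf)
  then show ?thesis
    using assms by (simp add: algebra_simps)
qed

definition bitwise_le :: "bool list \<Rightarrow> bool list \<Rightarrow> bool" where
  "bitwise_le y x \<longleftrightarrow> list_all2 (\<longrightarrow>) y x"

fun new_ones :: "bool list \<Rightarrow> bool list \<Rightarrow> nat" where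
  "new_ones (a # as) (b # bs) = of_bool (\<not> a \<and> b) + new_ones as bs"
| "new_ones _ _ = 0"

lemma zeros_le_zeros_add_new_ones:
  "length y = length x \<Longrightarrow> zeros x \<le> zeros y + new_ones x y"
  by (induction x arbitrary: y) (auto simp: length_Suc_conv, fastforce+)

lemma zeros_mono_bitwise_le: "bitwise_le y x \<Longrightarrow> zeros x \<le> zeros y"
  by (induction x arbitrary: y) (auto simp: bitwise_le_def list_all2_Cons2 le_SucI)

lemma zeros_strict_mono_bitwise_le: "bitwise_le y x \<Longrightarrow> y \<noteq> x \<Longrightarrow> zeros x < zeros y"
proof (induction x arbitrary: y)
  case Nil
  then show ?case by (simp add: bitwise_le_def)
next
  case (Cons a as)
  then obtain b bs where y: "y = b # bs" and le: "bitwise_le bs as" and "b \<longrightarrow> a"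
    by (auto simp: bitwise_le_def list_all2_Cons2)
  with Cons zeros_mono_bitwise_le[OF le] show ?case
    by (cases a; cases b) auto
qed

lemma expectation_mutate_bitwise_le:
  assumes "0 \<le> p" "p \<le> 1"
  shows "measure_pmf.expectation (mutate p x) (\<lambda>y. of_bool (bitwise_le y x)) = (1 - p) ^ zeros x"
proof (induction x)
  case Nil
  then show ?case by (simp add: bitwise_le_def)
next
  case (Cons b bs)
  then show ?case
    using assms
    by (subst expectation_mutate_Cons[OF assms], cases b)
       (simp_all del: mutate.simps add: bitwise_le_def algebra_simps)
qed

lemma expectation_mutate_unchanged:
  assumes "0 \<le> p" "p \<le> 1"
  shows "measure_pmf.expectation (mutate p x) (\<lambda>y. of_bool (y = x)) = (1 - p) ^ length x"
proof (induction x)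
  case Nil
  then show ?case by simp
next
  case (Cons b bs)
  then show ?case
    using assms
    by (subst expectation_mutate_Cons[OF assms]) (simp del: mutate.simps add: algebra_simps)
qed

lemma expectation_mutate_new_ones:
  assumes "0 \<le> p" "p \<le> 1"
  shows "measure_pmf.expectation (mutate p x) (\<lambda>y. real (new_ones x y)) = p * zeros x"
proof (induction x)
  case Nil
  then show ?case by simp
next
  case (Cons b bs)
  have "integrable (measure_pmf (mutate p bs)) g" for g :: "_ \<Rightarrow> real"
    by (rule integrable_measure_pmf_finite[OF finite_set_pmf_mutate])
  with Cons assms show ?case
    by (subst expectation_mutate_Cons[OF assms], cases b)
       (simp_all del: mutate.simps add: algebra_simps)
qed

lemma expectation_mutate_proper_bitwise_le:
  assumes "0 \<le> p" "p \<le> 1"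
  shows "measure_pmf.expectation (mutate p x) (\<lambda>y. of_bool (bitwise_le y x \<and> y \<noteq> x))
       = (1 - p) ^ zeros x - (1 - p) ^ length x"
proof -
  have "bitwise_le x x"
    by (simp add: bitwise_le_def list.rel_refl)
  then have "measure_pmf.expectation (mutate p x) (\<lambda>y. of_bool (bitwise_le y x \<and> y \<noteq> x))
      = measure_pmf.expectation (mutate p x) (\<lambda>y. of_bool (bitwise_le y x) - of_bool (y = x))"
    by (intro Bochner_Integration.integral_cong) auto
  also have "\<dots> = (1 - p) ^ zeros x - (1 - p) ^ length x"
    using assms
    by (subst Bochner_Integration.integral_diff)
       (auto simp: integrable_measure_pmf_finite[OF finite_set_pmf_mutate]
                   expectation_mutate_bitwise_le expectation_mutate_unchanged)
  finally show ?thesis .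
qed

lemma iid_list_Suc_map_pmf:
  "iid_list (Suc k) M = bind_pmf M (\<lambda>y. map_pmf ((#) y) (iid_list k M))"
  by (simp add: map_pmf_def)

lemma set_pmf_iid_list:
  "ys \<in> set_pmf (iid_list k M) \<Longrightarrow> length ys = k \<and> set ys \<subseteq> set_pmf M"
  by (induction k arbitrary: ys) (auto, blast)

lemma finite_set_pmf_iid_list: "finite (set_pmf M) \<Longrightarrow> finite (set_pmf (iid_list k M))"
  by (induction k) auto

lemma expectation_iid_list_Suc:
  fixes g :: "_ \<Rightarrow> real"
  assumes "finite (set_pmf M)"
  shows "measure_pmf.expectation (iid_list (Suc k) M) g =
         measure_pmf.expectation M (\<lambda>y. measure_pmf.expectation (iid_list k M) (\<lambda>ys. g (y # ys)))"
  unfolding iid_list_Suc_map_pmf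
  by (subst expectation_bind_pmf_finite)
     (use assms in \<open>simp_all add: finite_set_pmf_iid_list flip: iid_list_Suc_map_pmf\<close>)

lemma expectation_iid_list_all:
  assumes fin: "finite (set_pmf M)"
  shows "measure_pmf.expectation (iid_list k M) (\<lambda>ys. of_bool (list_all P ys) :: real)
       = measure_pmf.expectation M (\<lambda>y. of_bool (P y)) ^ k"
proof (induction k)
  case 0
  then show ?case by simp
next
  case (Suc k)
  have "measure_pmf.expectation (iid_list (Suc k) M) (\<lambda>ys. of_bool (list_all P ys) :: real)
      = measure_pmf.expectation M
          (\<lambda>y. measure_pmf.expectation (iid_list k M) (\<lambda>ys. of_bool (P y \<and> list_all P ys)))"
    by (simp only: expectation_iid_list_Suc[OF fin] list.pred_inject(2))
  also have "\<dots> = measure_pmf.expectation M (\<lambda>y. of_bool (P y)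
          * measure_pmf.expectation (iid_list k M) (\<lambda>ys. of_bool (list_all P ys)))"
    by (simp del: iid_list.simps add: of_bool_conj)
  finally show ?case
    using Suc by simp
qed

lemma expectation_iid_list_sum_list:
  fixes D :: "_ \<Rightarrow> real"
  assumes fin: "finite (set_pmf M)"
  shows "measure_pmf.expectation (iid_list k M) (\<lambda>ys. sum_list (map D ys))
       = k * measure_pmf.expectation M D"
proof (induction k)
  case 0
  then show ?case by simp
next
  case (Suc k)
  have "integrable (measure_pmf (iid_list k M)) g" for g :: "_ \<Rightarrow> real"
    by (simp add: integrable_measure_pmf_finite finite_set_pmf_iid_list fin)
  moreover have "integrable (measure_pmf M) D"
    by (simp add: integrable_measure_pmf_finite fin)
  ultimately show ?case
    using Suc by (simp del: iid_list.simps add: expectation_iid_list_Suc[OF fin] algebra_simps)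
qed

lemma set_pmf_select_best:
  assumes "ys \<noteq> []"
  shows "set_pmf (select_best f ys) \<subseteq> set ys"
proof -
  define I where "I = {i. i < length ys \<and> (\<forall>j<length ys. f (ys ! j) \<le> f (ys ! i))}"
  have "Max (f ` set ys) \<in> f ` set ys"
    using assms by (intro Max_in) auto
  then obtain m where m: "m \<in> set ys" "f m = Max (f ` set ys)"
    by (metis imageE)
  then obtain i where "i < length ys" "ys ! i = m"
    by (auto simp: in_set_conv_nth)
  with m have "i \<in> I"
    unfolding I_def by auto
  then have "set_pmf (pmf_of_set I) = I"
    by (intro set_pmf_of_set) (auto simp: I_def)
  then show ?thesis
    unfolding select_best_def I_def[symmetric] by (auto simp: I_def)
qed

lemma finite_set_pmf_select_best: "ys \<noteq> [] \<Longrightarrow> finite (set_pmf (select_best f ys))"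
  using set_pmf_select_best finite_subset by blast

lemma zeros_gain_ge:
  assumes "y \<in> set ys" "length y = length x"
  shows "of_bool (list_all (\<lambda>z. bitwise_le z x \<and> z \<noteq> x) ys)
           - (\<Sum>z\<leftarrow>ys. real (new_ones x z))
         \<le> real (zeros y) - real (zeros x)"
proof (cases "list_all (\<lambda>z. bitwise_le z x \<and> z \<noteq> x) ys")
  case True
  with assms(1) have "zeros x < zeros y"
    by (auto simp: list_all_iff intro: zeros_strict_mono_bitwise_le)
  moreover have "0 \<le> (\<Sum>z\<leftarrow>ys. real (new_ones x z))"
    by (intro sum_list_nonneg) auto
  ultimately show ?thesis
    using True by simp
next
  case False
  have "real (new_ones x y) \<le> (\<Sum>z\<leftarrow>ys. real (new_ones x z))"
    using assms(1) by (intro member_le_sum_list) auto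
  with zeros_le_zeros_add_new_ones[OF assms(2)] False show ?thesis
    by simp
qed

lemma expectation_zeros_gain_select_best_ge:
  fixes p :: real
  assumes p: "0 \<le> p" "p \<le> 1" and "k \<ge> 1"
  shows "((1 - p) ^ zeros x - (1 - p) ^ length x) ^ k - k * (p * zeros x)
         \<le> measure_pmf.expectation (bind_pmf (iid_list k (mutate p x)) (select_best f))
              (\<lambda>y. real (zeros y) - real (zeros x))"
proof -
  define Q where "Q = iid_list k (mutate p x)"
  define h where "h ys = of_bool (list_all (\<lambda>z. bitwise_le z x \<and> z \<noteq> x) ys)
                          - (\<Sum>z\<leftarrow>ys. real (new_ones x z))" for ys
  have finQ: "finite (set_pmf Q)"
    unfolding Q_def by (intro finite_set_pmf_iid_list finite_set_pmf_mutate)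
  have intQ: "integrable (measure_pmf Q) g" for g :: "_ \<Rightarrow> real"
    by (rule integrable_measure_pmf_finite[OF finQ])
  have nonempty: "ys \<noteq> []" if "ys \<in> set_pmf Q" for ys
    using set_pmf_iid_list[OF that[unfolded Q_def]] \<open>k \<ge> 1\<close> by auto
  have "((1 - p) ^ zeros x - (1 - p) ^ length x) ^ k - k * (p * zeros x)
      = measure_pmf.expectation Q h"
    unfolding h_def Q_def using p
    by (subst Bochner_Integration.integral_diff)
       (simp_all add: intQ[unfolded Q_def] finite_set_pmf_mutate expectation_iid_list_all
          expectation_iid_list_sum_list expectation_mutate_proper_bitwise_le
          expectation_mutate_new_ones)
  also have "\<dots> \<le> measure_pmf.expectation Q
                   (\<lambda>ys. measure_pmf.expectation (select_best f ys)
                          (\<lambda>y. real (zeros y) - real (zeros x)))"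
  proof (intro integral_mono_AE intQ, unfold AE_measure_pmf_iff, intro ballI)
    fix ys assume ys: "ys \<in> set_pmf Q"
    show "h ys \<le> measure_pmf.expectation (select_best f ys) (\<lambda>y. real (zeros y) - real (zeros x))"
    proof (intro measure_pmf.integral_ge_const integrable_measure_pmf_finite
             finite_set_pmf_select_best nonempty ys, unfold AE_measure_pmf_iff, intro ballI)
      fix y assume "y \<in> set_pmf (select_best f ys)"
      then have "y \<in> set ys"
        using set_pmf_select_best[OF nonempty[OF ys]] by auto
      moreover have "length y = length x"
        using \<open>y \<in> set ys\<close> set_pmf_iid_list[OF ys[unfolded Q_def]] length_mutate by auto
      ultimately show "h ys \<le> real (zeros y) - real (zeros x)"
        unfolding h_def by (rule zeros_gain_ge)
    qed
  qed
  also have "\<dots> = measure_pmf.expectation (bind_pmf Q (select_best f))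
                   (\<lambda>y. real (zeros y) - real (zeros x))"
    by (rule expectation_bind_pmf_finite[symmetric])
       (use finQ nonempty finite_set_pmf_select_best in auto)
  finally show ?thesis
    unfolding Q_def .
qed

lemma mutation_improves_ge:
  fixes c :: real
  assumes "0 < c" "c \<le> real n"
  shows "1 - exp (- c) - real z * (c / real n) \<le> (1 - c / real n) ^ z - (1 - c / real n) ^ n"
proof -
  define p where "p = c / real n"
  have p: "0 \<le> p" "p \<le> 1" and "real n > 0"
    using assms by (auto simp: p_def)
  have "1 - real z * p \<le> (1 - p) ^ z"
    using Bernoulli_inequality[of "- p" z] p by simp
  moreover have "(1 - p) ^ n \<le> exp (- c)"
  proof -
    have "(1 - p) ^ n \<le> exp (- p) ^ n"
      using p by (intro power_mono) (auto simp: exp_ge_add_one_self[of "- p", simplified])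
    also have "\<dots> = exp (- c)"
      using \<open>real n > 0\<close> by (simp add: p_def flip: exp_of_nat_mult)
    finally show ?thesis .
  qed
  ultimately show ?thesis
    unfolding p_def[symmetric] by linarith
qed

lemma expectation_zeros_gain_ea_next_ge:
  fixes c F lam \<epsilon> :: real
  assumes "0 < c" "c \<le> real n" "length x = n" "1 \<le> lam" "lam \<le> F"
    and Z: "real (zeros x) \<le> \<epsilon> * real n" and \<epsilon>: "c * \<epsilon> \<le> (1 - exp (- c)) / 2"
  shows "((1 - exp (- c)) / 2) ^ nat (round F) - nat (round F) * (c * \<epsilon>)
         \<le> measure_pmf.expectation (ea_next c n lam f x) (\<lambda>y. real (zeros y) - real (zeros x))"
proof -
  define p where "p = c / real n"
  define q where "q = (1 - exp (- c)) / 2"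
  define k where "k = nat (round lam)"
  define K where "K = nat (round F)"
  have "real n > 0" "0 \<le> p" "p \<le> 1"
    using assms(1,2) by (auto simp: p_def)
  have "1 \<le> k" "k \<le> K"
    using round_mono[OF \<open>1 \<le> lam\<close>] round_mono[OF \<open>lam \<le> F\<close>] by (auto simp: k_def K_def)
  have q: "2 * q = 1 - exp (- c)" and "c * \<epsilon> \<le> q"
    using \<epsilon> by (simp_all add: q_def)
  have "0 \<le> exp (- c)" "exp (- c) \<le> 1"
    using \<open>0 < c\<close> by auto
  then have "0 \<le> q" "q \<le> 1"
    using q by linarith+
  have "zeros x / real n \<le> \<epsilon>"
    using Z \<open>real n > 0\<close> by (simp add: pos_divide_le_eq)
  then have "c * (zeros x / real n) \<le> c * \<epsilon>"
    using \<open>0 < c\<close> by (intro mult_left_mono) auto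
  then have pZ: "p * zeros x \<le> c * \<epsilon>"
    by (simp add: p_def)
  have "q \<le> (1 - p) ^ zeros x - (1 - p) ^ length x"
    using mutation_improves_ge[OF assms(1,2), of "zeros x"] q pZ \<open>c * \<epsilon> \<le> q\<close>
    unfolding p_def[symmetric] \<open>length x = n\<close> by (simp add: mult.commute)
  then have "q ^ k \<le> ((1 - p) ^ zeros x - (1 - p) ^ length x) ^ k"
    using \<open>0 \<le> q\<close> by (rule power_mono)
  moreover have "q ^ K \<le> q ^ k"
    using \<open>k \<le> K\<close> \<open>0 \<le> q\<close> \<open>q \<le> 1\<close> by (rule power_decreasing)
  moreover have "k * (p * zeros x) \<le> K * (c * \<epsilon>)"
    using \<open>k \<le> K\<close> pZ \<open>0 \<le> p\<close>
    by (intro mult_mono[of "real k" "real K" "p * zeros x" "c * \<epsilon>"]) auto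
  moreover have "((1 - p) ^ zeros x - (1 - p) ^ length x) ^ k - k * (p * zeros x)
      \<le> measure_pmf.expectation (ea_next c n lam f x) (\<lambda>y. real (zeros y) - real (zeros x))"
    using expectation_zeros_gain_select_best_ge[OF \<open>0 \<le> p\<close> \<open>p \<le> 1\<close> \<open>1 \<le> k\<close>, of x f]
    unfolding ea_next_def p_def k_def .
  ultimately show ?thesis
    unfolding K_def[symmetric] q_def[symmetric] by linarith
qed

theorem mainTheorem18:
  fixes c F :: real
  assumes "c > 0" and "F > 1"
  shows "\<exists>\<epsilon> > 0. \<exists>\<alpha>\<^sub>2 > 0. \<exists>n\<^sub>0 :: nat. \<forall>n \<ge> n\<^sub>0.
           \<forall>(x :: bool list) (lam :: real) (f :: bool list \<Rightarrow> real).
             length x = n \<longrightarrow> monotone_bits n f \<longrightarrow> 1 \<le> lam \<longrightarrow> lam \<le> F \<longrightarrow>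
             real (zeros x) \<le> \<epsilon> * real n \<longrightarrow>
             measure_pmf.expectation (ea_next c n lam f x)
               (\<lambda>y. real (zeros y) - real (zeros x)) \<ge> \<alpha>\<^sub>2"
proof -
  define q where "q = (1 - exp (- c)) / 2"
  define K where "K = nat (round F)"
  define \<alpha> where "\<alpha> = q ^ K / 2"
  define \<epsilon> where "\<epsilon> = min (q / c) (\<alpha> / (K * c))"
  have "0 < q"
    using \<open>c > 0\<close> by (simp add: q_def)
  moreover have "1 \<le> K"
    using round_mono[of 1 F] \<open>F > 1\<close> by (simp add: K_def)
  ultimately have "0 < \<alpha>" "0 < \<epsilon>"
    using \<open>c > 0\<close> by (simp_all add: \<alpha>_def \<epsilon>_def)
  have "\<epsilon> \<le> q / c" "\<epsilon> \<le> \<alpha> / (K * c)"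
    by (simp_all add: \<epsilon>_def)
  then have "c * \<epsilon> \<le> q" "K * (c * \<epsilon>) \<le> \<alpha>"
    using \<open>c > 0\<close> \<open>1 \<le> K\<close> by (simp_all add: pos_le_divide_eq mult_ac)
  have "\<alpha> \<le> measure_pmf.expectation (ea_next c n lam f x) (\<lambda>y. real (zeros y) - real (zeros x))"
    if "nat \<lceil>c\<rceil> \<le> n" "length x = n" "1 \<le> lam" "lam \<le> F" "real (zeros x) \<le> \<epsilon> * real n"
    for n x lam f
  proof -
    have "c \<le> real n"
      using that(1) by linarith
    from expectation_zeros_gain_ea_next_ge[OF \<open>c > 0\<close> this that(2-5)
        \<open>c * \<epsilon> \<le> q\<close>[unfolded q_def], of f]
    show ?thesis
      using \<open>K * (c * \<epsilon>) \<le> \<alpha>\<close> unfolding q_def[symmetric] K_def[symmetric] \<alpha>_def by linarith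
  qed
  with \<open>0 < \<alpha>\<close> \<open>0 < \<epsilon>\<close> show ?thesis
    by blast
qed

end
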